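(* Let $\mu$ be a valuated matroid on $[n]$. (i) Let $f=(f_1,f_2):[n]\cup\{o\}\to([n]\cup\{o\})\times\mathbb{T}$ be a map with $f_2(i)=0$ whenever $f_1(i)\neq o$. Then for any weakly monomial matrix $A_f$ associated to $f$, $\overline{\operatorname{trop}}(f^{-1}(\mu))=\mathrm{val}(A_f)\odot\overline{\operatorname{trop}}(\mu)$. (ii) Conversely, if $A_f\in K^{n\times n}$ is a weakly monomial matrix with entries in $\{0,1\}$, then its associated map $f$ satisfies $\overline{\operatorname{trop}}(f^{-1}(\mu))=\mathrm{val}(A_f)\odot\overline{\operatorname{trop}}(\mu)$.
   Context: $K$ is a field with non-Archimedean valuation $\mathrm{val}:K\to\mathbb{T}=\mathbb{R}\cup\{\infty\}$; $(\mathrm{val}(M)\odot v)_i=\min_j(\mathrm{val}(M_{ij})+v_j)$, applied pointwise to sets. Valuated matroid of rank $r$ on finite $E$: $\nu:\binom{E}{r}\to\mathbb{T}$, not identically $\infty$, with exchange property (for all $I,J$, $i\in I\setminus J$ there is $j\in J\setminus I$ with $\nu(I)+\nu(J)\ge\nu((I\setminus i)\cup j)+\nu((J\setminus j)\cup i)$), up to additive constants; $\overline{\operatorname{trop}}(\nu)\subseteq\mathbb{P}(\mathbb{T}^E)$ is the set of $x$ with $\min_e(C_\nu(I)_e+x_e)$ attained at least twice for all $I\in\binom{E}{r+1}$ with $C_\nu(I)\ne(\infty,\dots)$, where $C_\nu(I)_e=\nu(I\setminus e)$ for $e\in I$, $\infty$ else. Pointed matroid $\mu_o$: $\mu$ extended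 to $[n]\cup\{o\}$ with $o$ a loop. With $S=f_1([n]\cup\{o\})$, the affine induced valuated matroid is $f^{-1}(\mu)(B)=\mu_o|_S(f_1(B))+\sum_{i\in B}f_2(i)$, where $\mu_o|_S$ is the restriction of $\mu_o$ to $S$ and $|B|$ equals its rank (value $\infty$ if $|f_1(B)|$ is too small); $\overline{\operatorname{trop}}(f^{-1}(\mu))$ denotes the projection to the coordinates in $[n]$ of its tropical linear space. Weakly monomial: at most one nonzero entry per row. Associated matrix of $f$ (defined when $f_2(i)\in\mathrm{val}(K)$ for all $i\in[n]$): $(A_f)_{ij}=k_i$ if $f_1(i)=j\in[n]$ with $\mathrm{val}(k_i)=f_2(i)$, and $0$ otherwise. Associated map of a weakly monomial $M$: $f(o)=(o,\infty)$; $f(i)=(o,\infty)$ if row $i$ of $M$ is zero; $f(i)=(j,\mathrm{val}(M_{ij}))$ if $M_{ij}\neq0$. *)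

theory Defs
  imports "HOL-Library.Extended_Real"
begin

text \<open>The tropical semiring T = R \<union> {\<infinity>} is modelled inside ereal, all
  values being required to differ from -\<infinity>. Ground sets are sets of naturals:
  [n] = {1..n} and the extra point o is 0, so [n] \<union> {o} = {0..n}.
  A point of P(T^E) is represented by all of its representatives, i.e. vectors
  x :: nat \<Rightarrow> ereal with entries in T on E, value \<infinity> off E, and not all \<infinity> on E.
  All sets below are closed under adding real constants, so equality of
  representative sets is equality of subsets of P(T^E).\<close>

definition nonarch_val :: "('k::field \<Rightarrow> ereal) \<Rightarrow> bool" where
  "nonarch_val v \<longleftrightarrow> v 0 = \<infinity> \<and> (\<forall>x. x \<noteq> 0 \<longrightarrow> v x \<noteq> \<infinity> \<and> v x \<noteq> -\<infinity>)
     \<and> (\<forall>x y. v (x * y) = v x + v y) \<and> (\<forall>x y. min (v x) (v y) \<le> v (x + y))"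

definition valuated_matroid :: "nat set \<Rightarrow> nat \<Rightarrow> (nat set \<Rightarrow> ereal) \<Rightarrow> bool" where
  "valuated_matroid E r \<nu> \<longleftrightarrow> finite E
     \<and> (\<forall>B. B \<subseteq> E \<and> card B = r \<longrightarrow> \<nu> B \<noteq> -\<infinity>)
     \<and> (\<exists>B. B \<subseteq> E \<and> card B = r \<and> \<nu> B \<noteq> \<infinity>)
     \<and> (\<forall>I J. I \<subseteq> E \<and> card I = r \<and> J \<subseteq> E \<and> card J = r \<longrightarrow>
          (\<forall>i \<in> I - J. \<exists>j \<in> J - I.
             \<nu> ((I - {i}) \<union> {j}) + \<nu> ((J - {j}) \<union> {i}) \<le> \<nu> I + \<nu> J))"

definition tvec :: "nat set \<Rightarrow> (nat \<Rightarrow> ereal) \<Rightarrow> bool" where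
  "tvec E x \<longleftrightarrow> (\<forall>e\<in>E. x e \<noteq> -\<infinity>) \<and> (\<forall>e. e \<notin> E \<longrightarrow> x e = \<infinity>) \<and> (\<exists>e\<in>E. x e \<noteq> \<infinity>)"

definition circ_vec :: "(nat set \<Rightarrow> ereal) \<Rightarrow> nat set \<Rightarrow> nat \<Rightarrow> ereal" where
  "circ_vec \<nu> I e = (if e \<in> I then \<nu> (I - {e}) else \<infinity>)"

definition min_twice :: "nat set \<Rightarrow> (nat \<Rightarrow> ereal) \<Rightarrow> bool" where
  "min_twice E y \<longleftrightarrow> (\<exists>e1\<in>E. \<exists>e2\<in>E. e1 \<noteq> e2 \<and>
       y e1 = (INF e\<in>E. y e) \<and> y e2 = (INF e\<in>E. y e))"

definition trop_bar :: "nat set \<Rightarrow> nat \<Rightarrow> (nat set \<Rightarrow> ereal) \<Rightarrow> (nat \<Rightarrow> ereal) set" where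
  "trop_bar E r \<nu> = {x. tvec E x \<and>
     (\<forall>I. I \<subseteq> E \<and> card I = r + 1 \<and> (\<exists>e\<in>E. circ_vec \<nu> I e \<noteq> \<infinity>) \<longrightarrow>
        min_twice E (\<lambda>e. circ_vec \<nu> I e + x e))}"

text \<open>Pointed matroid: extension by the loop o = 0.\<close>
definition pointed :: "(nat set \<Rightarrow> ereal) \<Rightarrow> nat set \<Rightarrow> ereal" where
  "pointed \<mu> B = (if 0 \<in> B then \<infinity> else \<mu> B)"

definition restr_rank :: "nat set \<Rightarrow> nat \<Rightarrow> (nat set \<Rightarrow> ereal) \<Rightarrow> nat set \<Rightarrow> nat" where
  "restr_rank E r \<nu> S = Max {card (B \<inter> S) | B. B \<subseteq> E \<and> card B = r \<and> \<nu> B \<noteq> \<infinity>}"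

text \<open>Restriction (deletion of E - S) of a valuated matroid, evaluated on subsets of S
  of size restr_rank E r \<nu> S.\<close>
definition restr :: "nat set \<Rightarrow> nat \<Rightarrow> (nat set \<Rightarrow> ereal) \<Rightarrow> nat set \<Rightarrow> nat set \<Rightarrow> ereal" where
  "restr E r \<nu> S A = (INF C \<in> {C. C \<subseteq> E - S \<and> card C = r - restr_rank E r \<nu> S}. \<nu> (A \<union> C))"

text \<open>Affine induced valuated matroid f^{-1}(\<mu>) on {0..n} for f = (f1, f2),
  where \<mu> has rank r on {1..n}; its rank is the rank of \<mu>_o restricted to S.\<close>
definition ind_rank :: "nat \<Rightarrow> nat \<Rightarrow> (nat set \<Rightarrow> ereal) \<Rightarrow> (nat \<Rightarrow> nat) \<Rightarrow> nat" where
  "ind_rank n r \<mu> f1 = restr_rank {0..n} r (pointed \<mu>) (f1 ` {0..n})"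

definition induced :: "nat \<Rightarrow> nat \<Rightarrow> (nat set \<Rightarrow> ereal) \<Rightarrow> (nat \<Rightarrow> nat) \<Rightarrow> (nat \<Rightarrow> ereal)
    \<Rightarrow> nat set \<Rightarrow> ereal" where
  "induced n r \<mu> f1 f2 B =
     (if card (f1 ` B) < ind_rank n r \<mu> f1 then \<infinity>
      else restr {0..n} r (pointed \<mu>) (f1 ` {0..n}) (f1 ` B) + (\<Sum>i\<in>B. f2 i))"

text \<open>Projection of trop_bar(f^{-1}(\<mu>)) to the coordinates in [n].\<close>
definition trop_induced :: "nat \<Rightarrow> nat \<Rightarrow> (nat set \<Rightarrow> ereal) \<Rightarrow> (nat \<Rightarrow> nat) \<Rightarrow> (nat \<Rightarrow> ereal)
    \<Rightarrow> (nat \<Rightarrow> ereal) set" where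
  "trop_induced n r \<mu> f1 f2 =
     {y. tvec {1..n} y \<and>
         (\<exists>x \<in> trop_bar {0..n} (ind_rank n r \<mu> f1) (induced n r \<mu> f1 f2). y = x(0 := \<infinity>))}"

text \<open>Tropical matrix-vector product val(M) \<odot> x, and its pointwise image on a set
  (points whose image is the all-\<infinity> vector are not points of P(T^n)).\<close>
definition tmult :: "('k \<Rightarrow> ereal) \<Rightarrow> nat \<Rightarrow> (nat \<Rightarrow> nat \<Rightarrow> 'k) \<Rightarrow> (nat \<Rightarrow> ereal) \<Rightarrow> nat \<Rightarrow> ereal" where
  "tmult v n M x = (\<lambda>i. if i \<in> {1..n} then (INF j\<in>{1..n}. v (M i j) + x j) else \<infinity>)"

definition tmult_set :: "('k \<Rightarrow> ereal) \<Rightarrow> nat \<Rightarrow> (nat \<Rightarrow> nat \<Rightarrow> 'k) \<Rightarrow> (nat \<Rightarrow> ereal) set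
    \<Rightarrow> (nat \<Rightarrow> ereal) set" where
  "tmult_set v n M X = {y. tvec {1..n} y \<and> (\<exists>x\<in>X. y = tmult v n M x)}"

definition weakly_monomial :: "nat \<Rightarrow> (nat \<Rightarrow> nat \<Rightarrow> 'k::zero) \<Rightarrow> bool" where
  "weakly_monomial n M \<longleftrightarrow>
     (\<forall>i\<in>{1..n}. \<forall>j\<in>{1..n}. \<forall>j'\<in>{1..n}. M i j \<noteq> 0 \<and> M i j' \<noteq> 0 \<longrightarrow> j = j')"

definition assoc_matrix :: "('k::zero \<Rightarrow> ereal) \<Rightarrow> nat \<Rightarrow> (nat \<Rightarrow> nat) \<Rightarrow> (nat \<Rightarrow> ereal)
    \<Rightarrow> (nat \<Rightarrow> nat \<Rightarrow> 'k) \<Rightarrow> bool" where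
  "assoc_matrix v n f1 f2 M \<longleftrightarrow> (\<forall>i\<in>{1..n}. f2 i \<in> range v) \<and>
     (\<forall>i\<in>{1..n}. \<forall>j\<in>{1..n}. (f1 i = j \<longrightarrow> v (M i j) = f2 i) \<and> (f1 i \<noteq> j \<longrightarrow> M i j = 0))"

definition assoc_f1 :: "nat \<Rightarrow> (nat \<Rightarrow> nat \<Rightarrow> 'k::zero) \<Rightarrow> nat \<Rightarrow> nat" where
  "assoc_f1 n M i = (if i \<in> {1..n} \<and> (\<exists>j\<in>{1..n}. M i j \<noteq> 0)
                     then (THE j. j \<in> {1..n} \<and> M i j \<noteq> 0) else 0)"

definition assoc_f2 :: "('k::zero \<Rightarrow> ereal) \<Rightarrow> nat \<Rightarrow> (nat \<Rightarrow> nat \<Rightarrow> 'k) \<Rightarrow> nat \<Rightarrow> ereal" where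
  "assoc_f2 v n M i = (if i \<in> {1..n} \<and> (\<exists>j\<in>{1..n}. M i j \<noteq> 0)
                       then v (M i (assoc_f1 n M i)) else \<infinity>)"

end

(*
  The induced valuated matroid nu = f^{-1}(mu) sees a set B only through its image: nu(B) is finite
  only if f1 is injective on B and f1(B) avoids o, and then nu(B) is the minimum of mu_o(f1(B) union C)
  over the completions C of f1(B) by elements outside S = f1([n] union {o}).  For an associated matrix,
  val(A_f) applied to z agrees with z o f1 on [n], so the claim is that pulling back along f1 maps
  trop(mu) onto trop(nu).

  Pullbacks lie in trop(nu): if a circuit of nu at I had a unique minimiser e0, then either another
  element of I has the same image, and hence the same value, or adding f1(e0) to an optimal completion
  of f1(I - e0) gives a circuit of mu.  For rank reasons the tie partner of f1(e0) in that circuit is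
  not a completion element, so it is the image of a tie partner of e0 in I.

  Every point x of trop(nu) is a pullback: x is the minimum of translated cocircuit vectors of nu,
  one through each finite coordinate of x (read off from a basis that is optimal for x), and every
  cocircuit vector of nu is the pullback of a minimum of cocircuit vectors of mu.  The corresponding
  minimum of the latter lies in trop(mu) and pulls back to x.
*)
theory Submission
  imports Defs
begin

section \<open>Tropical orthogonality to circuits\<close>

definition trop_orth :: "nat set \<Rightarrow> nat \<Rightarrow> (nat set \<Rightarrow> ereal) \<Rightarrow> (nat \<Rightarrow> ereal) \<Rightarrow> bool" where
  "trop_orth E r \<nu> x \<longleftrightarrow> (\<forall>I. I \<subseteq> E \<and> card I = r + 1 \<and> (\<exists>e\<in>E. circ_vec \<nu> I e \<noteq> \<infinity>) \<longrightarrow>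
      min_twice E (\<lambda>e. circ_vec \<nu> I e + x e))"

lemma trop_bar_iff: "x \<in> trop_bar E r \<nu> \<longleftrightarrow> tvec E x \<and> trop_orth E r \<nu> x"
  by (simp add: trop_bar_def trop_orth_def)

lemma trop_orthD:
  assumes "trop_orth E r \<nu> x" "I \<subseteq> E" "card I = r + 1" "\<exists>e\<in>E. circ_vec \<nu> I e \<noteq> \<infinity>"
  shows "min_twice E (\<lambda>e. circ_vec \<nu> I e + x e)"
  using assms unfolding trop_orth_def by blast

lemma INF_attained_finite:
  fixes f :: "'a \<Rightarrow> 'b::complete_linorder"
  assumes "finite A" "A \<noteq> {}"
  obtains a where "a \<in> A" "(INF x\<in>A. f x) = f a"
  using Min_in[of "f ` A"] Min_Inf[of "f ` A"] assms by auto

lemma ereal_INF_infinity: "(INF x\<in>A. \<infinity>) = (\<infinity>::ereal)"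
  by (simp add: INF_top_conv(1) flip: top_ereal_def)

lemma ex_other_if_card_ge_2: "2 \<le> card A \<Longrightarrow> \<exists>a\<in>A. a \<noteq> x"
  by (metis card_le_Suc0_iff_eq card.infinite not_less_eq_eq numeral_2_eq_2 zero_le)

lemma min_twice_rival:
  assumes "min_twice E y" "e0 \<in> E"
  obtains e where "e \<in> E" "e \<noteq> e0" "y e \<le> y e0"
proof -
  obtain e1 e2 where e12: "e1 \<in> E" "e2 \<in> E" "e1 \<noteq> e2"
    and "y e1 = (INF e\<in>E. y e)" "y e2 = (INF e\<in>E. y e)"
    using assms(1) unfolding min_twice_def by blast
  moreover have "(INF e\<in>E. y e) \<le> y e0" using assms(2) by (rule INF_lower)
  ultimately have "y e1 \<le> y e0" "y e2 \<le> y e0" by simp_all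
  then show thesis using that e12 by metis
qed

lemma min_twiceI:
  assumes "finite E" "E \<noteq> {}" and rival: "\<And>e0. e0 \<in> E \<Longrightarrow> \<exists>e\<in>E. e \<noteq> e0 \<and> y e \<le> y e0"
  shows "min_twice E y"
proof -
  obtain e0 where e0: "e0 \<in> E" "(INF e\<in>E. y e) = y e0"
    using assms(1,2) by (rule INF_attained_finite)
  obtain e where e: "e \<in> E" "e \<noteq> e0" "y e \<le> y e0"
    using rival[OF e0(1)] by blast
  have "y e0 \<le> y e"
    unfolding e0(2)[symmetric] using e(1) by (rule INF_lower)
  then have "y e = (INF e\<in>E. y e)"
    unfolding e0(2) using e(3) by (rule antisym[rotated])
  then show ?thesis
    unfolding min_twice_def using e(1,2) e0 by metis
qed

lemma trop_orthI:
  assumes "finite E"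
    and "\<And>I e0. I \<subseteq> E \<Longrightarrow> card I = r + 1 \<Longrightarrow> \<exists>e\<in>E. circ_vec \<nu> I e \<noteq> \<infinity> \<Longrightarrow> e0 \<in> E \<Longrightarrow>
      \<exists>e\<in>E. e \<noteq> e0 \<and> circ_vec \<nu> I e + x e \<le> circ_vec \<nu> I e0 + x e0"
  shows "trop_orth E r \<nu> x"
  unfolding trop_orth_def
proof (intro allI impI)
  fix I assume I: "I \<subseteq> E \<and> card I = r + 1 \<and> (\<exists>e\<in>E. circ_vec \<nu> I e \<noteq> \<infinity>)"
  show "min_twice E (\<lambda>e. circ_vec \<nu> I e + x e)"
  proof (rule min_twiceI[OF assms(1)])
    show "E \<noteq> {}" using I by blast
  next
    fix e0 assume "e0 \<in> E"
    then show "\<exists>e\<in>E. e \<noteq> e0 \<and> circ_vec \<nu> I e + x e \<le> circ_vec \<nu> I e0 + x e0"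
      using assms(2) I by blast
  qed
qed

lemma trop_orth_INF:
  assumes "finite E" "finite K" "K \<noteq> {}" and orth: "\<And>k. k \<in> K \<Longrightarrow> trop_orth E r \<nu> (g k)"
  shows "trop_orth E r \<nu> (\<lambda>e. INF k\<in>K. g k e)"
proof (rule trop_orthI[OF \<open>finite E\<close>])
  fix I e0 assume I: "I \<subseteq> E" "card I = r + 1" "\<exists>e\<in>E. circ_vec \<nu> I e \<noteq> \<infinity>" and "e0 \<in> E"
  obtain k where k: "k \<in> K" "(INF k\<in>K. g k e0) = g k e0"
    using assms(2,3) by (rule INF_attained_finite)
  obtain e where e: "e \<in> E" "e \<noteq> e0" "circ_vec \<nu> I e + g k e \<le> circ_vec \<nu> I e0 + g k e0"
    using trop_orthD[OF orth[OF k(1)] I] \<open>e0 \<in> E\<close> by (rule min_twice_rival)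
  have "circ_vec \<nu> I e + (INF k\<in>K. g k e) \<le> circ_vec \<nu> I e + g k e"
    by (intro add_left_mono INF_lower k(1))
  with e k(2) show "\<exists>e\<in>E. e \<noteq> e0 \<and>
      circ_vec \<nu> I e + (INF k\<in>K. g k e) \<le> circ_vec \<nu> I e0 + (INF k\<in>K. g k e0)"
    by (metis order_trans)
qed

lemma trop_orth_add_const:
  assumes "finite E" "trop_orth E r \<nu> g"
  shows "trop_orth E r \<nu> (\<lambda>e. c + g e)"
proof (rule trop_orthI[OF \<open>finite E\<close>])
  fix I e0 assume I: "I \<subseteq> E" "card I = r + 1" "\<exists>e\<in>E. circ_vec \<nu> I e \<noteq> \<infinity>" and "e0 \<in> E"
  obtain e where e: "e \<in> E" "e \<noteq> e0" "circ_vec \<nu> I e + g e \<le> circ_vec \<nu> I e0 + g e0"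
    using trop_orthD[OF assms(2) I] \<open>e0 \<in> E\<close> by (rule min_twice_rival)
  have "circ_vec \<nu> I e + (c + g e) \<le> circ_vec \<nu> I e0 + (c + g e0)"
    using add_left_mono[OF e(3), of c] by (simp add: ac_simps)
  with e show "\<exists>e\<in>E. e \<noteq> e0 \<and> circ_vec \<nu> I e + (c + g e) \<le> circ_vec \<nu> I e0 + (c + g e0)"
    by blast
qed

lemma trop_bar_INF:
  assumes "finite E" "finite K" "K \<noteq> {}" and g: "\<And>k. k \<in> K \<Longrightarrow> g k \<in> trop_bar E r \<nu>"
  shows "(\<lambda>e. INF k\<in>K. g k e) \<in> trop_bar E r \<nu>"
proof -
  have "tvec E (\<lambda>e. INF k\<in>K. g k e)"
    unfolding tvec_def
  proof (intro conjI ballI allI impI)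
    fix e assume "e \<in> E"
    obtain k where "k \<in> K" "(INF k\<in>K. g k e) = g k e" using assms(2,3) by (rule INF_attained_finite)
    then show "(INF k\<in>K. g k e) \<noteq> -\<infinity>" using g \<open>e \<in> E\<close> by (simp add: trop_bar_iff tvec_def)
  next
    fix e assume "e \<notin> E"
    then have "g k e = \<infinity>" if "k \<in> K" for k using g[OF that] by (simp add: trop_bar_iff tvec_def)
    then show "(INF k\<in>K. g k e) = \<infinity>" by (simp add: ereal_INF_infinity cong: INF_cong)
  next
    obtain k where "k \<in> K" using assms(3) by blast
    then have "tvec E (g k)" using g by (simp add: trop_bar_iff)
    then obtain e where "e \<in> E" "g k e \<noteq> \<infinity>" unfolding tvec_def by blast
    moreover have "(INF k\<in>K. g k e) \<le> g k e" using \<open>k \<in> K\<close> by (rule INF_lower)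
    ultimately have "(INF k\<in>K. g k e) \<noteq> \<infinity>" by (metis ereal_infty_less_eq(1))
    with \<open>e \<in> E\<close> show "\<exists>e\<in>E. (INF k\<in>K. g k e) \<noteq> \<infinity>" ..
  qed
  moreover have "trop_orth E r \<nu> (\<lambda>e. INF k\<in>K. g k e)"
    using assms by (intro trop_orth_INF) (auto simp: trop_bar_iff)
  ultimately show ?thesis by (simp add: trop_bar_iff)
qed

lemma trop_orth_infinity:
  assumes "finite E" "1 \<le> r"
  shows "trop_orth E r \<nu> (\<lambda>e. \<infinity>)"
proof (rule trop_orthI[OF \<open>finite E\<close>])
  fix I e0 assume I: "I \<subseteq> E" "card I = r + 1"
  have "2 \<le> card I" using I(2) assms(2) by simp
  then obtain e where "e \<in> I" "e \<noteq> e0" using ex_other_if_card_ge_2[of I e0] by blast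
  with I(1) show "\<exists>e\<in>E. e \<noteq> e0 \<and> circ_vec \<nu> I e + \<infinity> \<le> circ_vec \<nu> I e0 + \<infinity>"
    by auto
qed

lemma valuated_matroid_exchange:
  assumes "valuated_matroid E r \<nu>" "I \<subseteq> E" "card I = r" "J \<subseteq> E" "card J = r" "i \<in> I - J"
  obtains j where "j \<in> J - I" "\<nu> (insert j (I - {i})) + \<nu> (insert i (J - {j})) \<le> \<nu> I + \<nu> J"
  using assms unfolding valuated_matroid_def by (metis Un_insert_right sup_bot_right)

definition cocirc_vec :: "nat set \<Rightarrow> (nat set \<Rightarrow> ereal) \<Rightarrow> nat set \<Rightarrow> nat \<Rightarrow> ereal" where
  "cocirc_vec E \<nu> J e = (if e \<in> E \<and> e \<notin> J then \<nu> (insert e J) else \<infinity>)"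

lemma trop_orth_cocirc_vec:
  assumes vm: "valuated_matroid E r \<nu>" and J: "J \<subseteq> E" "card J + 1 = r"
  shows "trop_orth E r \<nu> (cocirc_vec E \<nu> J)"
proof -
  have finE: "finite E" using vm by (simp add: valuated_matroid_def)
  show ?thesis
  proof (rule trop_orthI[OF finE])
    fix I e0 assume I: "I \<subseteq> E" "card I = r + 1" and e0: "e0 \<in> E"
    let ?y = "\<lambda>e. circ_vec \<nu> I e + cocirc_vec E \<nu> J e"
    show "\<exists>e\<in>E. e \<noteq> e0 \<and> ?y e \<le> ?y e0"
    proof (cases "e0 \<in> I - J")
      case False
      have "2 \<le> card I" using I J by simp
      then obtain e where "e \<in> I" "e \<noteq> e0" using ex_other_if_card_ge_2[of I e0] by blast
      moreover have "?y e0 = \<infinity>" using False by (auto simp: circ_vec_def cocirc_vec_def)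
      ultimately show ?thesis using I by auto
    next
      case True
      have finI: "finite I" using I finE finite_subset by blast
      have "card (insert e0 J) = r" "card (I - {e0}) = r"
        using True J I finI finite_subset[OF J(1) finE] by auto
      then obtain j where j: "j \<in> (I - {e0}) - insert e0 J" and
        le: "\<nu> (insert j (insert e0 J - {e0})) + \<nu> (insert e0 (I - {e0} - {j}))
               \<le> \<nu> (insert e0 J) + \<nu> (I - {e0})"
        using valuated_matroid_exchange[OF vm, of "insert e0 J" "I - {e0}" e0] True J I e0 by auto
      have "insert j (insert e0 J - {e0}) = insert j J" "insert e0 (I - {e0} - {j}) = I - {j}"
        using True j by auto
      then have "?y j \<le> ?y e0"
        using le True j I by (auto simp: circ_vec_def cocirc_vec_def ac_simps)
      then show ?thesis using j I by blast
    qed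
  qed
qed

section \<open>Cocircuits dominating a point of a tropical linear space\<close>

locale trop_space_point =
  fixes E :: "nat set" and \<rho> :: nat and \<nu> :: "nat set \<Rightarrow> ereal" and x :: "nat \<Rightarrow> ereal"
  assumes finite_E: "finite E"
    and nu_not_minf: "\<And>B. B \<subseteq> E \<Longrightarrow> card B = \<rho> \<Longrightarrow> \<nu> B \<noteq> -\<infinity>"
    and basis_exists: "\<exists>B. B \<subseteq> E \<and> card B = \<rho> \<and> \<nu> B \<noteq> \<infinity>"
    and x_orth: "trop_orth E \<rho> \<nu> x"
    and x_not_minf: "\<And>e. e \<in> E \<Longrightarrow> x e \<noteq> -\<infinity>"
begin

definition bases :: "nat set set" where
  "bases = {B. B \<subseteq> E \<and> card B = \<rho> \<and> \<nu> B \<noteq> \<infinity>}"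

definition inf_coords :: "nat set" where
  "inf_coords = {e\<in>E. x e = \<infinity>}"

text \<open>\<open>real_of_ereal\<close> sends infinite values to 0, but weights are only compared between bases,
  where \<open>\<nu>\<close> and the summed coordinates are finite.\<close>

definition weight :: "nat set \<Rightarrow> real" where
  "weight B = real_of_ereal (\<nu> B) - (\<Sum>b\<in>B - inf_coords. real_of_ereal (x b))"

text \<open>If \<open>B\<close> is optimal and contains \<open>e\<close>, then no exchange of \<open>e\<close> for \<open>f\<close> adds an infinite
  coordinate or lowers the weight; this says that the cocircuit vector of \<open>B - {e}\<close>, shifted to
  agree with \<open>x\<close> at \<open>e\<close>, dominates \<open>x\<close> (\<open>dominating_cocircuit\<close>).\<close>

definition optimal :: "nat set \<Rightarrow> bool" where
  "optimal B \<longleftrightarrow> B \<in> bases \<and> (\<forall>B'\<in>bases. card (B' \<inter> inf_coords) \<le> card (B \<inter> inf_coords)) \<and>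
     (\<forall>B'\<in>bases. card (B' \<inter> inf_coords) = card (B \<inter> inf_coords) \<longrightarrow> weight B \<le> weight B')"

lemma optimal_exists: "\<exists>B. optimal B"
proof -
  let ?k = "\<lambda>B. card (B \<inter> inf_coords)"
  have fin: "finite bases"
    using finite_E unfolding bases_def by (auto intro: finite_subset[of _ "Pow E"])
  have ne: "bases \<noteq> {}" using basis_exists unfolding bases_def by blast
  have "Max (?k ` bases) \<in> ?k ` bases" using fin ne by (intro Max_in) auto
  then obtain B1 where B1: "B1 \<in> bases" "?k B1 = Max (?k ` bases)" by auto
  have kmax: "?k B \<le> ?k B1" if "B \<in> bases" for B
    using fin that unfolding B1(2) by (intro Max_ge) auto
  let ?Bk = "{B\<in>bases. ?k B = ?k B1}"
  obtain B0 where "is_arg_min weight (\<lambda>B. B \<in> ?Bk) B0"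
    using ex_is_arg_min_if_finite[of ?Bk weight] fin B1(1) by auto
  then have "B0 \<in> ?Bk" "\<And>B. B \<in> ?Bk \<Longrightarrow> weight B0 \<le> weight B"
    unfolding is_arg_min_linorder by auto
  then have "optimal B0" unfolding optimal_def using kmax by auto
  then show ?thesis ..
qed

lemma exchange_le_iff_weight_le:
  assumes B: "B \<in> bases" "insert g (B - {f}) \<in> bases"
    and f: "f \<in> B - inf_coords" and g: "g \<in> E - inf_coords - B"
  shows "\<nu> (insert g (B - {f})) + x f \<le> \<nu> B + x g \<longleftrightarrow> weight (insert g (B - {f})) \<le> weight B"
proof -
  let ?B' = "insert g (B - {f})" and ?xr = "\<lambda>b. real_of_ereal (x b)"
  have finB: "finite (B - inf_coords)" using B(1) finite_E unfolding bases_def by (auto intro: finite_subset)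
  have "?B' - inf_coords = insert g ((B - inf_coords) - {f})" using g by auto
  then have "(\<Sum>b\<in>?B' - inf_coords. ?xr b) = ?xr g + ((\<Sum>b\<in>B - inf_coords. ?xr b) - ?xr f)"
    using finB f g by (simp add: sum_diff1)
  then have w: "weight ?B' \<le> weight B \<longleftrightarrow>
      real_of_ereal (\<nu> ?B') + ?xr f \<le> real_of_ereal (\<nu> B) + ?xr g"
    unfolding weight_def by linarith
  have fin: "\<bar>\<nu> B\<bar> \<noteq> \<infinity>" "\<bar>\<nu> ?B'\<bar> \<noteq> \<infinity>" "\<bar>x f\<bar> \<noteq> \<infinity>" "\<bar>x g\<bar> \<noteq> \<infinity>"
    using B f g nu_not_minf x_not_minf unfolding bases_def inf_coords_def by auto
  show ?thesis
    unfolding w using fin by (cases "\<nu> B"; cases "\<nu> ?B'"; cases "x f"; cases "x g") auto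
qed

lemma optimal_through:
  assumes B0: "optimal B0" and e: "e \<in> E - inf_coords"
  obtains B where "optimal B" "e \<in> B"
proof (cases "e \<in> B0")
  case True
  then show thesis using that B0 by blast
next
  case False
  have B0b: "B0 \<subseteq> E" "card B0 = \<rho>" "\<nu> B0 \<noteq> \<infinity>"
    using B0 unfolding optimal_def bases_def by auto
  define I where "I = insert e B0"
  have I: "I \<subseteq> E" "card I = \<rho> + 1"
    using B0b e False finite_subset[OF B0b(1) finite_E] by (auto simp: I_def)
  have "I - {e} = B0" using False by (auto simp: I_def)
  then have circ_e: "circ_vec \<nu> I e = \<nu> B0" by (simp add: circ_vec_def I_def)
  then have "\<exists>f\<in>E. circ_vec \<nu> I f \<noteq> \<infinity>" using e B0b(3) by (intro bexI[of _ e]) auto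
  then have "min_twice E (\<lambda>f. circ_vec \<nu> I f + x f)" by (rule trop_orthD[OF x_orth I])
  then obtain f where f: "f \<in> E" "f \<noteq> e" and le: "circ_vec \<nu> I f + x f \<le> \<nu> B0 + x e"
    using e circ_e by (auto elim: min_twice_rival)
  have "\<nu> B0 + x e \<noteq> \<infinity>" using B0b(3) e by (simp add: inf_coords_def)
  with le have fI: "f \<in> I" and nu_f: "\<nu> (I - {f}) \<noteq> \<infinity>" and xf: "x f \<noteq> \<infinity>"
    by (auto simp: circ_vec_def split: if_splits)
  define B where "B = insert e (B0 - {f})"
  have B_eq: "B = I - {f}" using fI f(2) by (auto simp: B_def I_def)
  have f_out: "f \<in> B0 - inf_coords" using fI f xf by (auto simp: I_def inf_coords_def)
  have "B \<in> bases"
    using I fI nu_f finite_subset[OF I(1) finite_E] unfolding B_eq bases_def by auto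
  have B0_bases: "B0 \<in> bases" using B0 by (simp add: optimal_def)
  have same: "card (B \<inter> inf_coords) = card (B0 \<inter> inf_coords)"
    using e f_out by (auto simp: B_def intro!: arg_cong[where f = card])
  have "weight B \<le> weight B0"
    using exchange_le_iff_weight_le[OF B0_bases, of e f] \<open>B \<in> bases\<close> f_out e False le fI
    by (simp add: B_def circ_vec_def B_eq[unfolded B_def])
  moreover have "weight B0 \<le> weight B"
    using B0 \<open>B \<in> bases\<close> same by (simp add: optimal_def)
  ultimately have "optimal B"
    using B0 \<open>B \<in> bases\<close> same unfolding optimal_def by auto
  then show thesis using that by (simp add: B_def)
qed

lemma optimal_certificate:
  assumes B: "optimal B" and e: "e \<in> B - inf_coords" and f: "f \<in> E - (B - {e})"
  shows "x f + \<nu> B \<le> \<nu> (insert f (B - {e})) + x e"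
proof (cases "f = e")
  case True
  then show ?thesis using e by (simp add: insert_absorb add.commute)
next
  case False
  then have fe: "f \<noteq> e" and fB: "f \<notin> B" using f by auto
  let ?B' = "insert f (B - {e})"
  show ?thesis
  proof (cases "\<nu> ?B' = \<infinity>")
    case True
    then show ?thesis by simp
  next
    case False
    have Bb: "B \<in> bases" "B \<subseteq> E" "card B = \<rho>" using B unfolding optimal_def bases_def by auto
    have finB: "finite B" using Bb(2) finite_E by (rule finite_subset)
    have "?B' \<in> bases"
      using Bb finB fB e f False card_Suc_Diff1[OF finB, of e] by (auto simp: bases_def)
    have f_out: "f \<notin> inf_coords"
    proof
      assume "f \<in> inf_coords"
      then have "?B' \<inter> inf_coords = insert f (B \<inter> inf_coords)" using e by auto
      then have "card (?B' \<inter> inf_coords) = card (B \<inter> inf_coords) + 1" using fB finB by simp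
      then show False using B \<open>?B' \<in> bases\<close> unfolding optimal_def by fastforce
    qed
    have "?B' \<inter> inf_coords = B \<inter> inf_coords" using e f_out by auto
    then have "weight B \<le> weight ?B'" using B \<open>?B' \<in> bases\<close> by (simp add: optimal_def)
    moreover have "insert e (?B' - {f}) = B" using e fB by auto
    ultimately have "\<nu> B + x f \<le> \<nu> ?B' + x e"
      using exchange_le_iff_weight_le[OF \<open>?B' \<in> bases\<close>, of e f] Bb e f fe f_out fB by auto
    then show ?thesis by (simp add: add.commute)
  qed
qed

lemma dominating_cocircuit:
  assumes "e \<in> E" "x e \<noteq> \<infinity>"
  obtains J where "J \<subseteq> E" "e \<notin> J" "card J + 1 = \<rho>" "\<nu> (insert e J) \<noteq> \<infinity>"
    "\<forall>f\<in>E - J. x f + \<nu> (insert e J) \<le> \<nu> (insert f J) + x e"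
proof -
  obtain B0 where "optimal B0" using optimal_exists by blast
  moreover have "e \<in> E - inf_coords" using assms by (simp add: inf_coords_def)
  ultimately obtain B where B: "optimal B" "e \<in> B" by (rule optimal_through)
  then have Bb: "B \<subseteq> E" "card B = \<rho>" "\<nu> B \<noteq> \<infinity>" by (auto simp: optimal_def bases_def)
  have "finite B" using Bb(1) finite_E by (rule finite_subset)
  then have "card (B - {e}) + 1 = \<rho>" using Bb(2) card_Suc_Diff1[OF _ B(2)] by simp
  moreover have "insert e (B - {e}) = B" using B(2) by auto
  ultimately show thesis
    using that[of "B - {e}"] Bb optimal_certificate[OF B(1)] \<open>e \<in> E - inf_coords\<close> B(2) by auto
qed

end

section \<open>The induced valuated matroid\<close>

lemma ereal_minus_add_cancel: "\<bar>b\<bar> \<noteq> \<infinity> \<Longrightarrow> (a - b) + b = (a::ereal)"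
  by (cases a; cases b) auto

lemma ereal_le_minus_add:
  "\<bar>a\<bar> \<noteq> \<infinity> \<Longrightarrow> \<bar>b\<bar> \<noteq> \<infinity> \<Longrightarrow> u + a \<le> w + b \<Longrightarrow> u \<le> (b - a) + (w::ereal)"
  by (cases a; cases b; cases u; cases w) auto

lemma subset_atLeast1:
  assumes "X \<subseteq> {0..n}" "(0::nat) \<notin> X" shows "X \<subseteq> {1..n}"
proof
  fix x assume "x \<in> X"
  with assms show "x \<in> {1..n}" by (cases x) auto
qed

lemma pointed_eq: "0 \<notin> X \<Longrightarrow> pointed \<mu> X = \<mu> X"
  by (simp add: pointed_def)

lemma pointed_infinity: "0 \<in> X \<Longrightarrow> pointed \<mu> X = \<infinity>"
  by (simp add: pointed_def)

locale induced_setting =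
  fixes n r :: nat and \<mu> :: "nat set \<Rightarrow> ereal" and f1 :: "nat \<Rightarrow> nat" and f2 :: "nat \<Rightarrow> ereal"
  assumes mu: "valuated_matroid {1..n} r \<mu>"
    and f1_range: "\<And>i. i \<in> {0..n} \<Longrightarrow> f1 i \<in> {0..n}"
    and f2_zero: "\<And>i. i \<in> {0..n} \<Longrightarrow> f1 i \<noteq> 0 \<Longrightarrow> f2 i = 0"
begin

text \<open>\<open>\<rho>\<close> is the rank of \<open>\<mu>\<^sub>o|S\<close> and \<open>\<nu>\<close> is \<open>f\<^sup>-\<^sup>1(\<mu>)\<close>;
  \<open>restr\<close> evaluates \<open>\<mu>\<^sub>o|S\<close> as a minimum over the \<open>completions\<close>.\<close>

abbreviation "S \<equiv> f1 ` {0..n}"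
abbreviation "\<rho> \<equiv> ind_rank n r \<mu> f1"
abbreviation "\<nu> \<equiv> induced n r \<mu> f1 f2"
abbreviation "\<mu>\<^sub>o \<equiv> pointed \<mu>"
abbreviation "completions \<equiv> {C. C \<subseteq> {0..n} - S \<and> card C = r - \<rho>}"

lemma S_subset: "S \<subseteq> {0..n}"
  using f1_range by blast

lemma pointed_not_minf: "B \<subseteq> {0..n} \<Longrightarrow> card B = r \<Longrightarrow> \<mu>\<^sub>o B \<noteq> -\<infinity>"
  using mu subset_atLeast1[of B n] by (cases "0 \<in> B") (auto simp: pointed_def valuated_matroid_def)

lemma card_inter_S_le:
  assumes "B \<subseteq> {0..n}" "card B = r" "\<mu>\<^sub>o B \<noteq> \<infinity>"
  shows "card (B \<inter> S) \<le> \<rho>"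
  unfolding ind_rank_def restr_rank_def
  using assms by (intro Max_ge) (auto intro: finite_subset[of _ "(\<lambda>B. card (B \<inter> S)) ` Pow {0..n}"])

lemma ind_rank_attained:
  obtains B where "B \<subseteq> {1..n}" "card B = r" "\<mu> B \<noteq> \<infinity>" "card (B \<inter> S) = \<rho>"
proof -
  let ?R = "{card (B \<inter> S) | B. B \<subseteq> {0..n} \<and> card B = r \<and> \<mu>\<^sub>o B \<noteq> \<infinity>}"
  have "?R \<subseteq> (\<lambda>B. card (B \<inter> S)) ` Pow {0..n}" by blast
  then have "finite ?R" by (rule finite_subset) simp
  moreover have "?R \<noteq> {}"
  proof -
    obtain B where B: "B \<subseteq> {1..n}" "card B = r" "\<mu> B \<noteq> \<infinity>"
      using mu unfolding valuated_matroid_def by blast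
    then have "B \<subseteq> {0..n}" "\<mu>\<^sub>o B \<noteq> \<infinity>" by (auto simp: pointed_def)
    then have "card (B \<inter> S) \<in> ?R" using B(2) by blast
    then show ?thesis by blast
  qed
  ultimately have "\<rho> \<in> ?R" unfolding ind_rank_def restr_rank_def by (rule Max_in)
  then obtain B where B: "B \<subseteq> {0..n}" "card B = r" "\<mu>\<^sub>o B \<noteq> \<infinity>" "card (B \<inter> S) = \<rho>"
    unfolding mem_Collect_eq by (elim exE conjE) (rule that, simp_all)
  then have "0 \<notin> B" by (auto simp: pointed_def)
  show thesis
  proof (rule that)
    show "B \<subseteq> {1..n}" using B(1) \<open>0 \<notin> B\<close> by (rule subset_atLeast1)
    show "\<mu> B \<noteq> \<infinity>" using B(3) \<open>0 \<notin> B\<close> by (simp add: pointed_eq)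
  qed (use B in auto)
qed

lemma ind_rank_le: "\<rho> \<le> r"
proof -
  obtain B where "B \<subseteq> {1..n}" "card B = r" "card (B \<inter> S) = \<rho>" by (rule ind_rank_attained)
  then show ?thesis by (metis card_mono finite_atLeastAtMost finite_subset inf_le1)
qed

lemma Diff_S_in_completions: "B \<subseteq> {0..n} \<Longrightarrow> card B = r \<Longrightarrow> card (B \<inter> S) = \<rho> \<Longrightarrow> B - S \<in> completions"
  by (auto simp: card_Diff_subset_Int finite_subset)

lemma finite_completions: "finite completions"
  by (rule finite_subset[of _ "Pow {0..n}"]) auto

lemma completions_nonempty: "completions \<noteq> {}"
proof -
  obtain B where "B \<subseteq> {1..n}" "card B = r" "card (B \<inter> S) = \<rho>" by (rule ind_rank_attained)
  then have "B - S \<in> completions" by (intro Diff_S_in_completions) auto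
  then show ?thesis by blast
qed

lemma card_Un_completion:
  assumes "A \<subseteq> S" "C \<in> completions"
  shows "card (A \<union> C) = card A + (r - \<rho>)"
proof -
  have "finite A" "finite C" using assms S_subset by (auto intro: finite_subset)
  moreover have "A \<inter> C = {}" using assms by blast
  ultimately show ?thesis using assms(2) by (simp add: card_Un_disjoint)
qed

lemma induced_eq:
  assumes B: "B \<subseteq> {0..n}" "card B = \<rho>"
  shows "\<nu> B = (if inj_on f1 B then (INF C\<in>completions. \<mu>\<^sub>o (f1 ` B \<union> C)) else \<infinity>)"
proof -
  have finB: "finite B" using B(1) by (rule finite_subset) simp
  have restr: "restr {0..n} r \<mu>\<^sub>o S A = (INF C\<in>completions. \<mu>\<^sub>o (A \<union> C))" for A
    by (simp add: restr_def ind_rank_def)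
  show ?thesis
  proof (cases "inj_on f1 B")
    case False
    then have "card (f1 ` B) < \<rho>"
      using B(2) card_image_le[OF finB, of f1] inj_on_iff_eq_card[OF finB, of f1] by linarith
    then show ?thesis using False by (simp add: induced_def)
  next
    case True
    then have card: "card (f1 ` B) = \<rho>" using B(2) by (simp add: card_image)
    show ?thesis
    proof (cases "0 \<in> f1 ` B")
      case True
      then have "(INF C\<in>completions. \<mu>\<^sub>o (f1 ` B \<union> C)) = \<infinity>"
        by (simp add: pointed_infinity ereal_INF_infinity)
      then show ?thesis using card \<open>inj_on f1 B\<close> by (simp add: induced_def restr)
    next
      case False
      then have "(\<Sum>i\<in>B. f2 i) = 0" using B(1) f2_zero by (force intro: sum.neutral)
      then show ?thesis using card \<open>inj_on f1 B\<close> by (simp add: induced_def restr)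
    qed
  qed
qed

lemma induced_small: "B \<subseteq> {0..n} \<Longrightarrow> card B < \<rho> \<Longrightarrow> \<nu> B = \<infinity>"
  using card_image_le[of B f1] finite_subset[of B "{0..n}"] by (simp add: induced_def)

lemma induced_le:
  "B \<subseteq> {0..n} \<Longrightarrow> card B = \<rho> \<Longrightarrow> inj_on f1 B \<Longrightarrow> C \<in> completions \<Longrightarrow> \<nu> B \<le> \<mu>\<^sub>o (f1 ` B \<union> C)"
  by (simp add: induced_eq) (rule INF_lower, simp)

lemma induced_finiteD:
  assumes B: "B \<subseteq> {0..n}" "card B = \<rho>" and fin: "\<nu> B \<noteq> \<infinity>"
  shows "inj_on f1 B" "0 \<notin> f1 ` B"
proof -
  show inj: "inj_on f1 B" using fin unfolding induced_eq[OF B] by (auto split: if_splits)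
  show "0 \<notin> f1 ` B"
  proof
    assume "0 \<in> f1 ` B"
    then have "\<nu> B = \<infinity>"
      using inj by (simp add: induced_eq[OF B] pointed_infinity ereal_INF_infinity)
    with fin show False ..
  qed
qed

lemma induced_same_image:
  assumes "B \<subseteq> {0..n}" "card B = \<rho>" "B' \<subseteq> {0..n}" "card B' = \<rho>" "f1 ` B = f1 ` B'"
  shows "\<nu> B = \<nu> B'"
proof -
  have "finite B" "finite B'" using assms(1,3) by (auto intro: finite_subset)
  then have "inj_on f1 B \<longleftrightarrow> inj_on f1 B'" using assms(2,4,5) by (simp add: inj_on_iff_eq_card)
  then show ?thesis using assms by (simp add: induced_eq)
qed

lemma induced_not_minf:
  assumes B: "B \<subseteq> {0..n}" "card B = \<rho>"
  shows "\<nu> B \<noteq> -\<infinity>"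
proof (cases "\<nu> B = \<infinity>")
  case False
  then have inj: "inj_on f1 B" by (rule induced_finiteD[OF B])
  obtain C where C: "C \<in> completions" "\<nu> B = \<mu>\<^sub>o (f1 ` B \<union> C)"
    using INF_attained_finite[OF finite_completions completions_nonempty, of "\<lambda>C. \<mu>\<^sub>o (f1 ` B \<union> C)"]
    unfolding induced_eq[OF B] using inj by auto
  have "card (f1 ` B \<union> C) = r"
    using card_Un_completion[OF _ C(1), of "f1 ` B"] B inj ind_rank_le by (auto simp: card_image)
  moreover have "f1 ` B \<union> C \<subseteq> {0..n}" using B(1) C(1) S_subset by auto
  ultimately show ?thesis using C(2) pointed_not_minf by simp
qed simp

lemma induced_basis_exists: "\<exists>B. B \<subseteq> {0..n} \<and> card B = \<rho> \<and> \<nu> B \<noteq> \<infinity>"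
proof -
  obtain Bm where Bm: "Bm \<subseteq> {1..n}" "card Bm = r" "\<mu> Bm \<noteq> \<infinity>" "card (Bm \<inter> S) = \<rho>"
    by (rule ind_rank_attained)
  have "Bm \<inter> S \<subseteq> f1 ` {0..n}" by (rule Int_lower2)
  then obtain B where B: "B \<subseteq> {0..n}" "inj_on f1 B" "Bm \<inter> S = f1 ` B"
    unfolding subset_image_inj by (elim exE conjE)
  have card: "card B = \<rho>" using Bm(4) B by (simp add: card_image)
  have "Bm - S \<in> completions" using Bm by (intro Diff_S_in_completions) auto
  then have "\<nu> B \<le> \<mu>\<^sub>o (f1 ` B \<union> (Bm - S))" using B card by (intro induced_le)
  moreover have "f1 ` B \<union> (Bm - S) = Bm" using B(3) by blast
  moreover have "\<mu>\<^sub>o Bm = \<mu> Bm" using Bm(1) by (intro pointed_eq) auto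
  ultimately have "\<nu> B \<noteq> \<infinity>" using Bm(3) by (metis ereal_infty_less_eq(1))
  then show ?thesis using B(1) card by blast
qed

text \<open>A preimage, under pulling back along \<open>f1\<close>, of the cocircuit vector of \<open>\<nu>\<close> at \<open>J\<close>.\<close>

definition pulled_cocirc :: "nat set \<Rightarrow> nat \<Rightarrow> ereal" where
  "pulled_cocirc J a = (INF C\<in>completions. cocirc_vec {1..n} \<mu>\<^sub>o (f1 ` J \<union> C) a)"

lemma pulled_cocirc_outside:
  assumes "a \<notin> {1..n}"
  shows "pulled_cocirc J a = \<infinity>"
proof -
  have "cocirc_vec {1..n} \<mu>\<^sub>o X a = \<infinity>" for X using assms unfolding cocirc_vec_def by auto
  then show ?thesis by (simp add: pulled_cocirc_def ereal_INF_infinity)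
qed

context
  fixes J :: "nat set"
  assumes J: "J \<subseteq> {0..n}" "inj_on f1 J" "0 \<notin> f1 ` J" "card J + 1 = \<rho>"
begin

lemma card_completed:
  assumes "C \<in> completions"
  shows "card (f1 ` J \<union> C) + 1 = r"
proof -
  have "card (f1 ` J \<union> C) = card J + (r - \<rho>)"
    using card_Un_completion[OF image_mono[OF J(1)] assms] J(2) by (simp add: card_image)
  then show ?thesis using J(4) ind_rank_le by linarith
qed

lemma completed_subset: "C \<in> completions \<Longrightarrow> f1 ` J \<union> C \<subseteq> {0..n}"
  using J(1) S_subset by auto

lemma trop_orth_pulled_cocirc: "trop_orth {1..n} r \<mu> (pulled_cocirc J)"
  unfolding pulled_cocirc_def
proof (rule trop_orth_INF[OF _ finite_completions completions_nonempty])
  fix C assume C: "C \<in> completions"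
  show "trop_orth {1..n} r \<mu> (cocirc_vec {1..n} \<mu>\<^sub>o (f1 ` J \<union> C))"
  proof (cases "0 \<in> C")
    case True
    then have "cocirc_vec {1..n} \<mu>\<^sub>o (f1 ` J \<union> C) = (\<lambda>a. \<infinity>)"
      by (auto simp: cocirc_vec_def pointed_infinity)
    moreover have "1 \<le> r" using card_completed[OF C] by simp
    ultimately show ?thesis by (simp add: trop_orth_infinity)
  next
    case False
    then have "0 \<notin> f1 ` J \<union> C" using J(3) by simp
    then have sub: "f1 ` J \<union> C \<subseteq> {1..n}" using completed_subset[OF C] by (intro subset_atLeast1)
    have "cocirc_vec {1..n} \<mu>\<^sub>o (f1 ` J \<union> C) = cocirc_vec {1..n} \<mu> (f1 ` J \<union> C)"
      using \<open>0 \<notin> f1 ` J \<union> C\<close> by (auto simp: cocirc_vec_def pointed_eq)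
    then show ?thesis using trop_orth_cocirc_vec[OF mu sub card_completed[OF C]] by simp
  qed
qed simp

lemma pulled_cocirc_not_minf: "pulled_cocirc J a \<noteq> -\<infinity>"
proof -
  obtain C where C: "C \<in> completions"
    and eq: "pulled_cocirc J a = cocirc_vec {1..n} \<mu>\<^sub>o (f1 ` J \<union> C) a"
    unfolding pulled_cocirc_def by (rule INF_attained_finite[OF finite_completions completions_nonempty])
  show ?thesis
  proof (cases "a \<in> {1..n} \<and> a \<notin> f1 ` J \<union> C")
    case True
    then have "card (insert a (f1 ` J \<union> C)) = r"
      using card_completed[OF C] finite_subset[OF completed_subset[OF C]] by simp
    moreover have "insert a (f1 ` J \<union> C) \<subseteq> {0..n}" using True completed_subset[OF C] by auto
    ultimately show ?thesis using eq True pointed_not_minf by (simp add: cocirc_vec_def)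
  qed (use eq in \<open>auto simp: cocirc_vec_def\<close>)
qed

lemma induced_insert_collision:
  assumes i: "i \<in> {0..n}" "f1 i \<in> f1 ` J"
  shows "\<nu> (insert i J) = \<infinity>"
proof (cases "i \<in> J")
  case True
  then show ?thesis using J by (simp add: insert_absorb induced_small)
next
  case False
  have "finite J" using J(1) by (rule finite_subset) simp
  then have card: "card (insert i J) = \<rho>" and not_inj: "\<not> inj_on f1 (insert i J)"
    using J(4) False i(2) by auto
  have sub: "insert i J \<subseteq> {0..n}" using i J(1) by simp
  show ?thesis unfolding induced_eq[OF sub card] if_not_P[OF not_inj] ..
qed

lemma pulled_cocirc_pullback:
  assumes i: "i \<in> {0..n}"
  shows "pulled_cocirc J (f1 i) = \<nu> (insert i J)"
proof -
  have pointwise: "cocirc_vec {1..n} \<mu>\<^sub>o (f1 ` J \<union> C) (f1 i)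
      = (if f1 i \<in> f1 ` J then \<infinity> else \<mu>\<^sub>o (f1 ` insert i J \<union> C))" if "C \<in> completions" for C
  proof -
    have "f1 i \<notin> C" using that i by blast
    moreover have "f1 i \<in> {1..n} \<or> f1 i = 0" using f1_range[OF i] by auto
    ultimately show ?thesis by (auto simp: cocirc_vec_def pointed_infinity)
  qed
  then have pulled: "pulled_cocirc J (f1 i)
      = (INF C\<in>completions. if f1 i \<in> f1 ` J then \<infinity> else \<mu>\<^sub>o (f1 ` insert i J \<union> C))"
    unfolding pulled_cocirc_def by (intro INF_cong) simp_all
  show ?thesis
  proof (cases "f1 i \<in> f1 ` J")
    case True
    then show ?thesis using i by (simp add: pulled ereal_INF_infinity induced_insert_collision)
  next
    case False
    have "finite J" using J(1) by (rule finite_subset) simp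
    then have card: "card (insert i J) = \<rho>" and inj: "inj_on f1 (insert i J)"
      using J(2,4) False by (auto simp: image_iff)
    have sub: "insert i J \<subseteq> {0..n}" using i J(1) by simp
    have "\<nu> (insert i J) = (INF C\<in>completions. \<mu>\<^sub>o (f1 ` insert i J \<union> C))"
      unfolding induced_eq[OF sub card] if_P[OF inj] ..
    then show ?thesis using False by (simp add: pulled)
  qed
qed

lemma shifted_pulled_cocirc_in_trop_bar:
  assumes c: "\<bar>c\<bar> \<noteq> \<infinity>" and e: "e \<in> {0..n}" "\<nu> (insert e J) \<noteq> \<infinity>"
  shows "(\<lambda>a. c + pulled_cocirc J a) \<in> trop_bar {1..n} r \<mu>"
proof -
  have fin_e: "pulled_cocirc J (f1 e) \<noteq> \<infinity>" using e by (simp add: pulled_cocirc_pullback)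
  have "tvec {1..n} (\<lambda>a. c + pulled_cocirc J a)"
    unfolding tvec_def
  proof (intro conjI ballI allI impI)
    fix a
    show "c + pulled_cocirc J a \<noteq> -\<infinity>" using c pulled_cocirc_not_minf by (cases c) auto
    show "a \<notin> {1..n} \<Longrightarrow> c + pulled_cocirc J a = \<infinity>" by (simp add: pulled_cocirc_outside)
  next
    have "f1 e \<in> {1..n}" using fin_e pulled_cocirc_outside by blast
    moreover have "c + pulled_cocirc J (f1 e) \<noteq> \<infinity>" using c fin_e by (cases c) auto
    ultimately show "\<exists>a\<in>{1..n}. c + pulled_cocirc J a \<noteq> \<infinity>" ..
  qed
  moreover have "trop_orth {1..n} r \<mu> (\<lambda>a. c + pulled_cocirc J a)"
    by (intro trop_orth_add_const trop_orth_pulled_cocirc) simp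
  ultimately show ?thesis by (simp add: trop_bar_iff)
qed

end

lemma induced_trop_space_point: "x \<in> trop_bar {0..n} \<rho> \<nu> \<Longrightarrow> trop_space_point {0..n} \<rho> \<nu> x"
  by unfold_locales (auto simp: trop_bar_iff tvec_def induced_not_minf induced_basis_exists)

lemma dominating_lifted_cocircuit:
  assumes x: "x \<in> trop_bar {0..n} \<rho> \<nu>" and e: "e \<in> {0..n}" "x e \<noteq> \<infinity>"
  obtains h where "h \<in> trop_bar {1..n} r \<mu>" "h (f1 e) = x e" "\<forall>i\<in>{0..n}. x i \<le> h (f1 i)"
proof -
  interpret trop_space_point "{0..n}" \<rho> \<nu> x using x by (rule induced_trop_space_point)
  obtain J where J: "J \<subseteq> {0..n}" "e \<notin> J" "card J + 1 = \<rho>" "\<nu> (insert e J) \<noteq> \<infinity>"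
    and dom: "\<forall>f\<in>{0..n} - J. x f + \<nu> (insert e J) \<le> \<nu> (insert f J) + x e"
    using e by (rule dominating_cocircuit)
  have finJ: "finite J" using J(1) by (rule finite_subset) simp
  have eJ: "insert e J \<subseteq> {0..n}" "card (insert e J) = \<rho>" using J e finJ by auto
  have good: "inj_on f1 J" "0 \<notin> f1 ` J"
    using induced_finiteD[OF eJ J(4)] by (auto intro: inj_on_subset)
  have fin_eJ: "\<bar>\<nu> (insert e J)\<bar> \<noteq> \<infinity>" using J(4) induced_not_minf[OF eJ] by auto
  have fin_xe: "\<bar>x e\<bar> \<noteq> \<infinity>" using e x_not_minf by auto
  define c where "c = x e - \<nu> (insert e J)"
  have "\<bar>c\<bar> \<noteq> \<infinity>" using fin_eJ fin_xe unfolding c_def by (cases "x e"; cases "\<nu> (insert e J)") auto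
  have pullback: "pulled_cocirc J (f1 i) = \<nu> (insert i J)" if "i \<in> {0..n}" for i
    using J(1) good J(3) that by (rule pulled_cocirc_pullback)
  have "x i \<le> c + pulled_cocirc J (f1 i)" if i: "i \<in> {0..n}" for i
  proof (cases "i \<in> J")
    case True
    then have "\<nu> (insert i J) = \<infinity>" using J by (simp add: insert_absorb induced_small)
    then show ?thesis using i by (simp add: pullback)
  next
    case False
    then have "x i + \<nu> (insert e J) \<le> \<nu> (insert i J) + x e" using dom i by blast
    then show ?thesis unfolding c_def pullback[OF i] by (rule ereal_le_minus_add[OF fin_eJ fin_xe])
  qed
  moreover have "c + pulled_cocirc J (f1 e) = x e"
    using e(1) fin_eJ by (simp add: pullback c_def ereal_minus_add_cancel)
  moreover have "(\<lambda>a. c + pulled_cocirc J a) \<in> trop_bar {1..n} r \<mu>"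
    using J(1) good J(3) \<open>\<bar>c\<bar> \<noteq> \<infinity>\<close> e(1) J(4) by (rule shifted_pulled_cocirc_in_trop_bar)
  ultimately show thesis using that[of "\<lambda>a. c + pulled_cocirc J a"] by blast
qed

lemma trop_bar_induced_lift:
  assumes x: "x \<in> trop_bar {0..n} \<rho> \<nu>"
  obtains z where "z \<in> trop_bar {1..n} r \<mu>" "\<forall>i\<in>{0..n}. z (f1 i) = x i"
proof -
  define K where "K = {e\<in>{0..n}. x e \<noteq> \<infinity>}"
  have "\<forall>e\<in>K. \<exists>h. h \<in> trop_bar {1..n} r \<mu> \<and> h (f1 e) = x e \<and> (\<forall>i\<in>{0..n}. x i \<le> h (f1 i))"
  proof
    fix e assume "e \<in> K"
    then have "e \<in> {0..n}" "x e \<noteq> \<infinity>" by (simp_all add: K_def)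
    then obtain h where "h \<in> trop_bar {1..n} r \<mu>" "h (f1 e) = x e" "\<forall>i\<in>{0..n}. x i \<le> h (f1 i)"
      by (rule dominating_lifted_cocircuit[OF x])
    then show "\<exists>h. h \<in> trop_bar {1..n} r \<mu> \<and> h (f1 e) = x e \<and> (\<forall>i\<in>{0..n}. x i \<le> h (f1 i))"
      by blast
  qed
  from bchoice[OF this] obtain h where h: "\<forall>e\<in>K. h e \<in> trop_bar {1..n} r \<mu> \<and> h e (f1 e) = x e \<and>
      (\<forall>i\<in>{0..n}. x i \<le> h e (f1 i))" ..
  define z where "z a = (INF e\<in>K. h e a)" for a
  have "finite K" "K \<noteq> {}" using x unfolding K_def trop_bar_iff tvec_def by auto
  then have "z \<in> trop_bar {1..n} r \<mu>" unfolding z_def using h by (intro trop_bar_INF) auto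
  moreover have "z (f1 i) = x i" if i: "i \<in> {0..n}" for i
  proof (rule antisym)
    show "x i \<le> z (f1 i)" unfolding z_def using h i by (intro INF_greatest) blast
    show "z (f1 i) \<le> x i"
      using h i unfolding z_def K_def by (cases "x i = \<infinity>") (auto intro: INF_lower2)
  qed
  ultimately show thesis using that by blast
qed

lemma pointed_drop_completion:
  assumes A: "A \<subseteq> S" "card A = \<rho>" and s0: "s0 \<in> S" "s0 \<notin> A"
    and C: "C \<in> completions" "a \<in> C"
  shows "\<mu>\<^sub>o (insert s0 (A \<union> C) - {a}) = \<infinity>"
proof (rule ccontr)
  let ?X = "insert s0 (A \<union> C) - {a}"
  assume fin: "\<mu>\<^sub>o ?X \<noteq> \<infinity>"
  have finA: "finite A" and finC: "finite C"
    using A(1) C(1) S_subset by (auto intro: finite_subset)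
  have "s0 \<notin> C" "a \<notin> S" using s0 C by auto
  have "card (A \<union> C) = r" using card_Un_completion[OF A(1) C(1)] A(2) ind_rank_le by simp
  then have card: "card ?X = r" using s0(2) \<open>s0 \<notin> C\<close> C(2) finA finC by simp
  have "?X \<subseteq> {0..n}" using A(1) s0(1) C(1) S_subset by auto
  then have "card (?X \<inter> S) \<le> \<rho>" using card fin by (rule card_inter_S_le)
  moreover have "insert s0 A \<subseteq> ?X \<inter> S" using A(1) s0(1) \<open>a \<notin> S\<close> by auto
  then have "card (insert s0 A) \<le> card (?X \<inter> S)" using finA finC by (intro card_mono) auto
  ultimately show False using s0(2) finA A(2) by simp
qed

lemma induced_exchange_le:
  assumes B: "B \<subseteq> {0..n}" "card B = \<rho>" "inj_on f1 B" and e0: "e0 \<in> {0..n}" "f1 e0 \<notin> f1 ` B"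
    and e: "e \<in> B" and C: "C \<in> completions"
  shows "\<nu> (insert e0 B - {e}) \<le> \<mu>\<^sub>o (insert (f1 e0) (f1 ` B \<union> C) - {f1 e})"
proof -
  let ?B' = "insert e0 B - {e}"
  have "e0 \<notin> B" "e0 \<noteq> e" using e0(2) e by auto
  have finB: "finite B" using B(1) by (rule finite_subset) simp
  have B': "?B' \<subseteq> {0..n}" "card ?B' = \<rho>" using B e e0(1) \<open>e0 \<notin> B\<close> finB by auto
  have image: "f1 ` ?B' = insert (f1 e0) (f1 ` B - {f1 e})"
    using B(3) e \<open>e0 \<notin> B\<close> \<open>e0 \<noteq> e\<close> by (auto simp: inj_on_image_set_diff dest: inj_onD)
  have "card (f1 ` B) = \<rho>" using B(2,3) by (simp add: card_image)
  then have "card (f1 ` ?B') = \<rho>"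
    unfolding image using e e0(2) finB card_Suc_Diff1[of "f1 ` B" "f1 e"] by simp
  then have "inj_on f1 ?B'" using B' finite_subset[OF B'(1)] by (simp add: inj_on_iff_eq_card)
  then have "\<nu> ?B' \<le> \<mu>\<^sub>o (f1 ` ?B' \<union> C)" using B' C by (intro induced_le)
  also have "f1 ` ?B' \<union> C = insert (f1 e0) (f1 ` B \<union> C) - {f1 e}"
    unfolding image using C e B(1) e0(2) by auto
  finally show ?thesis .
qed

text \<open>Adding \<open>f1 e0\<close> to an optimal completion of \<open>f1 ` B\<close> gives a circuit of \<open>\<mu>\<close>. The tie
  partner of \<open>f1 e0\<close> in it is not a completion element (\<open>pointed_drop_completion\<close>), so it is
  the image of some \<open>e \<in> B\<close>.\<close>

lemma fresh_image_tie:
  assumes z: "z \<in> trop_bar {1..n} r \<mu>" and B: "B \<subseteq> {0..n}" "card B = \<rho>" "\<nu> B \<noteq> \<infinity>"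
    and e0: "e0 \<in> {0..n}" "f1 e0 \<notin> f1 ` B" "z (f1 e0) \<noteq> \<infinity>"
  shows "\<exists>e\<in>B. \<nu> (insert e0 B - {e}) + z (f1 e) \<le> \<nu> B + z (f1 e0)"
proof -
  have inj: "inj_on f1 B" and "0 \<notin> f1 ` B" using induced_finiteD[OF B] by auto
  obtain C0 where C0: "C0 \<in> completions" "\<nu> B = \<mu>\<^sub>o (f1 ` B \<union> C0)"
    using INF_attained_finite[OF finite_completions completions_nonempty, of "\<lambda>C. \<mu>\<^sub>o (f1 ` B \<union> C)"]
    unfolding induced_eq[OF B(1,2)] if_P[OF inj] by blast
  define s0 and A where "s0 = f1 e0" and "A = f1 ` B"
  have "z 0 = \<infinity>" using z by (simp add: trop_bar_iff tvec_def)
  then have "s0 \<noteq> 0" using e0(3) unfolding s0_def by metis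
  then have s0: "s0 \<in> {1..n}" "s0 \<in> S" "s0 \<notin> A"
    using f1_range[OF e0(1)] e0(1,2) by (auto simp: s0_def A_def)
  have AS: "A \<subseteq> S" "card A = \<rho>" using B(1,2) inj by (auto simp: A_def card_image)
  have "0 \<notin> C0" using C0(2) B(3) pointed_infinity[of _ \<mu>] by auto
  define J where "J = insert s0 (A \<union> C0)"
  have "0 \<notin> J" using s0(1) \<open>0 \<notin> C0\<close> \<open>0 \<notin> f1 ` B\<close> by (auto simp: J_def A_def)
  then have J_sub: "J \<subseteq> {1..n}" using s0(1) AS C0(1) S_subset by (intro subset_atLeast1) (auto simp: J_def)
  have "card (A \<union> C0) = r" using card_Un_completion[OF AS(1) C0(1)] AS(2) ind_rank_le by simp
  moreover have "finite J" using J_sub by (rule finite_subset) simp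
  moreover have "s0 \<notin> C0" using s0(2) C0(1) by blast
  ultimately have card_J: "card J = r + 1" using s0(3) by (simp add: J_def)
  have "J - {s0} = A \<union> C0" using s0(3) \<open>s0 \<notin> C0\<close> by (auto simp: J_def)
  then have circ_s0: "circ_vec \<mu> J s0 = \<nu> B"
    using C0(2) \<open>0 \<notin> J\<close> by (simp add: circ_vec_def J_def A_def pointed_eq)
  with s0(1) B(3) have "\<exists>a\<in>{1..n}. circ_vec \<mu> J a \<noteq> \<infinity>" by (intro bexI[of _ s0]) auto
  then have "min_twice {1..n} (\<lambda>a. circ_vec \<mu> J a + z a)"
    using z J_sub card_J by (intro trop_orthD) (auto simp: trop_bar_iff)
  then obtain a where a: "a \<in> {1..n}" "a \<noteq> s0" and le: "circ_vec \<mu> J a + z a \<le> \<nu> B + z s0"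
    using s0(1) circ_s0 by (auto elim: min_twice_rival)
  have "\<nu> B + z s0 \<noteq> \<infinity>" using B(3) e0(3) by (simp add: s0_def)
  with le have "a \<in> J" and mu_a: "\<mu>\<^sub>o (J - {a}) \<noteq> \<infinity>"
    using \<open>0 \<notin> J\<close> by (auto simp: circ_vec_def pointed_eq split: if_splits)
  then have "a \<notin> C0" using pointed_drop_completion[OF AS s0(2,3) C0(1)] by (auto simp: J_def)
  then obtain e where e: "e \<in> B" "f1 e = a" using \<open>a \<in> J\<close> a(2) by (auto simp: J_def A_def)
  have "\<nu> (insert e0 B - {e}) \<le> \<mu>\<^sub>o (J - {a})"
    using induced_exchange_le[OF B(1,2) inj e0(1,2) e(1) C0(1)] e(2) by (simp add: J_def A_def s0_def)
  also have "\<dots> = circ_vec \<mu> J a" using \<open>0 \<notin> J\<close> \<open>a \<in> J\<close> by (simp add: circ_vec_def pointed_eq)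
  finally have "\<nu> (insert e0 B - {e}) + z (f1 e) \<le> circ_vec \<mu> J a + z a"
    using e(2) by (simp add: add_right_mono)
  then show ?thesis using le e(1) by (auto simp: s0_def intro: order_trans)
qed

lemma pullback_tie:
  assumes z: "z \<in> trop_bar {1..n} r \<mu>" and I: "I \<subseteq> {0..n}" "card I = \<rho> + 1" "e0 \<in> I"
    and fin: "\<nu> (I - {e0}) + z (f1 e0) \<noteq> \<infinity>"
  shows "\<exists>e\<in>I - {e0}. \<nu> (I - {e}) + z (f1 e) \<le> \<nu> (I - {e0}) + z (f1 e0)"
proof -
  have finI: "finite I" using I(1) by (rule finite_subset) simp
  have B: "I - {e0} \<subseteq> {0..n}" "card (I - {e0}) = \<rho>" "\<nu> (I - {e0}) \<noteq> \<infinity>"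
    and "z (f1 e0) \<noteq> \<infinity>"
    using I finI fin by auto
  show ?thesis
  proof (cases "f1 e0 \<in> f1 ` (I - {e0})")
    case True
    then obtain e1 where e1: "e1 \<in> I - {e0}" "f1 e1 = f1 e0" by (metis imageE)
    have "f1 ` (I - {e1}) = f1 ` (I - {e0})"
    proof -
      have "I - {e1} = insert e0 (I - {e0} - {e1})" using e1(1) I(3) by blast
      then have "f1 ` (I - {e1}) = insert (f1 e1) (f1 ` (I - {e0} - {e1}))" using e1(2) by simp
      also have "\<dots> = f1 ` (I - {e0})" using e1(1) by (metis image_insert insert_Diff)
      finally show ?thesis .
    qed
    moreover have "I - {e1} \<subseteq> {0..n}" "card (I - {e1}) = \<rho>" using I finI e1(1) by auto
    ultimately have "\<nu> (I - {e1}) = \<nu> (I - {e0})" using B(1,2) by (intro induced_same_image)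
    then show ?thesis using e1 by (intro bexI[of _ e1]) auto
  next
    case False
    have "insert e0 (I - {e0}) = I" using I(3) by (rule insert_Diff)
    then show ?thesis using fresh_image_tie[OF z B _ False \<open>z (f1 e0) \<noteq> \<infinity>\<close>] I(1,3) by auto
  qed
qed

lemma trop_orth_pullback:
  assumes z: "z \<in> trop_bar {1..n} r \<mu>" and n: "1 \<le> n"
  shows "trop_orth {0..n} \<rho> \<nu> (\<lambda>i. if i \<in> {0..n} then z (f1 i) else \<infinity>)"
proof (rule trop_orthI)
  fix I e0 assume I: "I \<subseteq> {0..n}" "card I = \<rho> + 1" and e0: "e0 \<in> {0..n}"
  let ?x = "\<lambda>i. if i \<in> {0..n} then z (f1 i) else \<infinity>"
  let ?y = "\<lambda>e. circ_vec \<nu> I e + ?x e"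
  show "\<exists>e\<in>{0..n}. e \<noteq> e0 \<and> ?y e \<le> ?y e0"
  proof (cases "e0 \<in> I \<and> \<nu> (I - {e0}) + z (f1 e0) \<noteq> \<infinity>")
    case True
    then obtain e where "e \<in> I - {e0}" "\<nu> (I - {e}) + z (f1 e) \<le> \<nu> (I - {e0}) + z (f1 e0)"
      using pullback_tie[OF z I] by blast
    then show ?thesis using I(1) True e0 by (intro bexI[of _ e]) (auto simp: circ_vec_def)
  next
    case False
    then have "?y e0 = \<infinity>" using e0 by (auto simp: circ_vec_def)
    moreover have "(if e0 = 0 then 1 else 0) \<in> {0..n}" using n by simp
    ultimately show ?thesis by (intro bexI[of _ "if e0 = 0 then 1 else 0"]) auto
  qed
qed simp

lemma tmult_assoc_matrix:
  fixes v :: "'k::field \<Rightarrow> ereal" and M :: "nat \<Rightarrow> nat \<Rightarrow> 'k"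
  assumes val: "nonarch_val v" and M: "assoc_matrix v n f1 f2 M" and z0: "z 0 = \<infinity>"
    and i: "i \<in> {1..n}"
  shows "tmult v n M z i = z (f1 i)"
proof -
  have "v 0 = \<infinity>" using val by (simp add: nonarch_val_def)
  then have entry: "v (M i j) + z j = (if j = f1 i then z j else \<infinity>)" if "j \<in> {1..n}" for j
    using M i that f2_zero[of i] by (auto simp: assoc_matrix_def)
  have "tmult v n M z i = (INF j\<in>{1..n}. v (M i j) + z j)"
    using i by (simp add: tmult_def)
  also have "\<dots> = (INF j\<in>{1..n}. if j = f1 i then z j else \<infinity>)"
    by (rule INF_cong[OF refl entry])
  also have "\<dots> = z (f1 i)"
  proof (cases "f1 i \<in> {1..n}")
    case True
    then show ?thesis by (intro antisym INF_greatest) (auto intro: INF_lower2[OF True])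
  next
    case False
    then have "f1 i = 0" using f1_range[of i] i by auto
    then show ?thesis using False z0 by (simp add: ereal_INF_infinity)
  qed
  finally show ?thesis .
qed

context
  fixes v :: "'k::field \<Rightarrow> ereal" and M :: "nat \<Rightarrow> nat \<Rightarrow> 'k"
  assumes val: "nonarch_val v" and M: "assoc_matrix v n f1 f2 M"
begin

lemma trop_induced_subset_tmult_set:
  "trop_induced n r \<mu> f1 f2 \<subseteq> tmult_set v n M (trop_bar {1..n} r \<mu>)"
proof
  fix y assume "y \<in> trop_induced n r \<mu> f1 f2"
  then obtain x where y: "tvec {1..n} y" and x: "x \<in> trop_bar {0..n} \<rho> \<nu>" and yx: "y = x(0 := \<infinity>)"
    unfolding trop_induced_def by blast
  obtain z where z: "z \<in> trop_bar {1..n} r \<mu>" and zx: "\<forall>i\<in>{0..n}. z (f1 i) = x i"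
    using x by (rule trop_bar_induced_lift)
  have z0: "z 0 = \<infinity>" using z by (simp add: trop_bar_iff tvec_def)
  have "y j = tmult v n M z j" for j
  proof (cases "j \<in> {1..n}")
    case True
    then show ?thesis using yx zx by (auto simp: tmult_assoc_matrix[where z = z, OF val M z0])
  next
    case False
    then show ?thesis using y by (auto simp: tvec_def tmult_def)
  qed
  then have "y = tmult v n M z" ..
  then show "y \<in> tmult_set v n M (trop_bar {1..n} r \<mu>)"
    unfolding tmult_set_def using y z by blast
qed

lemma tmult_set_subset_trop_induced:
  "tmult_set v n M (trop_bar {1..n} r \<mu>) \<subseteq> trop_induced n r \<mu> f1 f2"
proof
  fix y assume "y \<in> tmult_set v n M (trop_bar {1..n} r \<mu>)"
  then obtain z where y: "tvec {1..n} y" and z: "z \<in> trop_bar {1..n} r \<mu>" and yz: "y = tmult v n M z"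
    unfolding tmult_set_def by blast
  have z0: "z 0 = \<infinity>" and z_not_minf: "\<And>a. z a \<noteq> -\<infinity>"
    using z by (auto simp: trop_bar_iff tvec_def)
  obtain i where i: "i \<in> {1..n}" "y i \<noteq> \<infinity>" using y by (auto simp: tvec_def)
  define x where "x i = (if i \<in> {0..n} then z (f1 i) else \<infinity>)" for i
  have y_x: "y j = x j" if "j \<in> {1..n}" for j
    using that by (simp add: yz x_def tmult_assoc_matrix[where z = z, OF val M z0])
  have "tvec {0..n} x"
    using z_not_minf y_x i unfolding tvec_def x_def by (auto intro!: bexI[of _ i])
  moreover have "trop_orth {0..n} \<rho> \<nu> x"
    unfolding x_def using z i by (intro trop_orth_pullback) auto
  ultimately have "x \<in> trop_bar {0..n} \<rho> \<nu>" by (simp add: trop_bar_iff)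
  moreover have "y = x(0 := \<infinity>)"
    using y y_x by (auto simp: tvec_def x_def)
  ultimately show "y \<in> trop_induced n r \<mu> f1 f2"
    unfolding trop_induced_def using y by blast
qed

theorem trop_induced_eq_tmult_set: "trop_induced n r \<mu> f1 f2 = tmult_set v n M (trop_bar {1..n} r \<mu>)"
  using trop_induced_subset_tmult_set tmult_set_subset_trop_induced by (rule equalityI)

end

end

section \<open>Associated maps of weakly monomial matrices\<close>

lemma nonarch_val_one:
  assumes "nonarch_val v"
  shows "v 1 = 0"
proof -
  have "v 1 = v 1 + v 1" using assms unfolding nonarch_val_def by (metis mult_1)
  moreover have "\<bar>v 1\<bar> \<noteq> \<infinity>" using assms unfolding nonarch_val_def by force
  ultimately show ?thesis by (cases "v 1") auto
qed

lemma assoc_f1_eq: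
  assumes "weakly_monomial n M" "i \<in> {1..n}" "j \<in> {1..n}" "M i j \<noteq> 0"
  shows "assoc_f1 n M i = j"
proof -
  have "(THE j. j \<in> {1..n} \<and> M i j \<noteq> 0) = j"
    using assms unfolding weakly_monomial_def by (intro the_equality) blast+
  then show ?thesis using assms(2-4) unfolding assoc_f1_def by auto
qed

lemma assoc_f1_nonzero:
  assumes "weakly_monomial n M" "assoc_f1 n M i \<noteq> 0"
  shows "i \<in> {1..n}" "assoc_f1 n M i \<in> {1..n}" "M i (assoc_f1 n M i) \<noteq> 0"
proof -
  have "i \<in> {1..n} \<and> (\<exists>j\<in>{1..n}. M i j \<noteq> 0)"
    using assms(2) unfolding assoc_f1_def by (auto split: if_splits)
  then obtain j where "i \<in> {1..n}" "j \<in> {1..n}" "M i j \<noteq> 0" by blast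
  moreover from this have "assoc_f1 n M i = j" using assms(1) by (intro assoc_f1_eq)
  ultimately show "i \<in> {1..n}" "assoc_f1 n M i \<in> {1..n}" "M i (assoc_f1 n M i) \<noteq> 0" by simp_all
qed

lemma assoc_f2_eq:
  assumes "weakly_monomial n M"
  shows "assoc_f2 v n M i = (if assoc_f1 n M i = 0 then \<infinity> else v (M i (assoc_f1 n M i)))"
proof (cases "assoc_f1 n M i = 0")
  case True
  have "\<not> (i \<in> {1..n} \<and> (\<exists>j\<in>{1..n}. M i j \<noteq> 0))"
    using True assoc_f1_eq[OF assms] by fastforce
  then have "assoc_f2 v n M i = \<infinity>" unfolding assoc_f2_def by (rule if_not_P)
  then show ?thesis using True by simp
next
  case False
  then show ?thesis using assoc_f1_nonzero[OF assms False] by (auto simp: assoc_f2_def)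
qed

lemma assoc_matrix_assoc_map:
  assumes val: "nonarch_val v" and M: "weakly_monomial n M"
  shows "assoc_matrix v n (assoc_f1 n M) (assoc_f2 v n M) M"
  unfolding assoc_matrix_def
proof (intro conjI ballI impI)
  fix i
  have "v 0 = \<infinity>" using val by (simp add: nonarch_val_def)
  then show "assoc_f2 v n M i \<in> range v" by (metis assoc_f2_eq[OF M] rangeI)
next
  fix i j assume "j \<in> {1..n}" "assoc_f1 n M i = j"
  then show "v (M i j) = assoc_f2 v n M i" by (auto simp: assoc_f2_eq[OF M])
next
  fix i j assume "i \<in> {1..n}" "j \<in> {1..n}" "assoc_f1 n M i \<noteq> j"
  then show "M i j = 0" using assoc_f1_eq[OF M] by blast
qed

lemma induced_setting_assoc_map:
  assumes val: "nonarch_val v" and mu: "valuated_matroid {1..n} r \<mu>"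
    and M: "weakly_monomial n M" and M01: "\<forall>i\<in>{1..n}. \<forall>j\<in>{1..n}. M i j \<in> {0, 1}"
  shows "induced_setting n r \<mu> (assoc_f1 n M) (assoc_f2 v n M)"
proof
  fix i
  show "assoc_f1 n M i \<in> {0..n}"
    using assoc_f1_nonzero[OF M] by (cases "assoc_f1 n M i = 0") auto
  assume "assoc_f1 n M i \<noteq> 0"
  with M01 have "M i (assoc_f1 n M i) = 1" using assoc_f1_nonzero[OF M] by fastforce
  then show "assoc_f2 v n M i = 0"
    using \<open>assoc_f1 n M i \<noteq> 0\<close> by (simp add: assoc_f2_eq[OF M] nonarch_val_one[OF val])
qed (rule mu)

theorem lemma2p22:
  fixes v :: "'k::field \<Rightarrow> ereal" and n r :: nat and \<mu> :: "nat set \<Rightarrow> ereal"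
  assumes val: "nonarch_val v"
    and mu: "valuated_matroid {1..n} r \<mu>"
  shows "(\<forall>(f1 :: nat \<Rightarrow> nat) (f2 :: nat \<Rightarrow> ereal) (M :: nat \<Rightarrow> nat \<Rightarrow> 'k).
            (\<forall>i\<in>{0..n}. f1 i \<in> {0..n} \<and> f2 i \<noteq> -\<infinity>) \<and>
            (\<forall>i\<in>{0..n}. f1 i \<noteq> 0 \<longrightarrow> f2 i = 0) \<and>
            weakly_monomial n M \<and> assoc_matrix v n f1 f2 M \<longrightarrow>
            trop_induced n r \<mu> f1 f2 = tmult_set v n M (trop_bar {1..n} r \<mu>))
       \<and> (\<forall>M :: nat \<Rightarrow> nat \<Rightarrow> 'k.
            weakly_monomial n M \<and> (\<forall>i\<in>{1..n}. \<forall>j\<in>{1..n}. M i j \<in> {0, 1}) \<longrightarrow>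
            trop_induced n r \<mu> (assoc_f1 n M) (assoc_f2 v n M)
              = tmult_set v n M (trop_bar {1..n} r \<mu>))"
proof (intro conjI allI impI)
  fix f1 :: "nat \<Rightarrow> nat" and f2 :: "nat \<Rightarrow> ereal" and M :: "nat \<Rightarrow> nat \<Rightarrow> 'k"
  assume f: "(\<forall>i\<in>{0..n}. f1 i \<in> {0..n} \<and> f2 i \<noteq> -\<infinity>) \<and> (\<forall>i\<in>{0..n}. f1 i \<noteq> 0 \<longrightarrow> f2 i = 0) \<and>
    weakly_monomial n M \<and> assoc_matrix v n f1 f2 M"
  then interpret induced_setting n r \<mu> f1 f2 using mu by unfold_locales auto
  show "trop_induced n r \<mu> f1 f2 = tmult_set v n M (trop_bar {1..n} r \<mu>)"
    using f by (intro trop_induced_eq_tmult_set val) auto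
next
  fix M :: "nat \<Rightarrow> nat \<Rightarrow> 'k"
  assume M: "weakly_monomial n M \<and> (\<forall>i\<in>{1..n}. \<forall>j\<in>{1..n}. M i j \<in> {0, 1})"
  then interpret induced_setting n r \<mu> "assoc_f1 n M" "assoc_f2 v n M"
    using induced_setting_assoc_map[OF val mu] by blast
  show "trop_induced n r \<mu> (assoc_f1 n M) (assoc_f2 v n M) = tmult_set v n M (trop_bar {1..n} r \<mu>)"
    using M by (intro trop_induced_eq_tmult_set val assoc_matrix_assoc_map) auto
qed

end
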